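(* Let $p$ be an odd prime and let $\zeta\in\mathbb{Z}_p$ be such that $-\zeta$ is not a square modulo $p$. Let $\alpha,\beta,\gamma\in\mathbb{Z}_p$ and let $k\ge0$ be an integer such that: - $p^k\mid\alpha$ and $p^k\mid(\beta-\gamma)$; - $p^{k+1}\nmid\alpha$ or $p^{k+1}\nmid(\beta-\gamma)$. Let $$f(x)=(x^2+p\alpha x+p\beta+\zeta)(x^2-p\alpha x+p\gamma+\zeta).$$ Then every monic degree-$4$ polynomial $g\in\mathbb{Z}_p[x]$ with $g\equiv f\pmod{p^{2k+3}}$ (coefficientwise) is reducible in $\mathbb{Z}_p[x]$.
   Context: Reducible means it can be written as a product of two nonconstant polynomials in $\mathbb{Z}_p[x]$. *)

theory Defs
  imports "HOL-Computational_Algebra.Polynomial" "HOL-Computational_Algebra.Primes" "HOL-Library.Cardinality"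
begin

text \<open>The prime p is encoded as the cardinality of a type of class prime_base.
  The p-adic integers are the inverse limit of the rings Z/p^n Z, represented by
  compatible sequences of canonical residues.\<close>

class prime_base = assumes prime_base: "prime (CARD('a))"


typedef ('p::prime_base) padic =
  "{f :: nat \<Rightarrow> int. \<forall>n. f n = f (Suc n) mod (int CARD('p)) ^ n}"
  by (rule exI[of _ "\<lambda>_. 0"]) simp

setup_lifting type_definition_padic

lemma padic_canon:
  assumes "\<forall>n. f n = f (Suc n) mod (int CARD('p::prime_base)) ^ n"
  shows "f n mod (int CARD('p)) ^ n = f n"
  using assms by (metis mod_mod_trivial)

lemma card_pos_pb: "(0::int) < int CARD('p::prime_base)"
  using prime_base[where 'a='p] prime_gt_0_nat by simp

lemma pow_dvd_Suc: "(m::int) ^ n dvd m ^ Suc n" by simp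

lemma padic_compat:
  fixes M :: int
  assumes "\<And>a b c d m. a mod m = c mod m \<Longrightarrow> b mod m = d mod m \<Longrightarrow> op a b mod m = op c d mod m"
    and "\<And>n. f n = f (Suc n) mod M ^ n" and "\<And>n. g n = g (Suc n) mod M ^ n"
  shows "op (f n) (g n) mod M ^ n = op (f (Suc n)) (g (Suc n)) mod M ^ Suc n mod M ^ n"
proof -
  have "op (f (Suc n)) (g (Suc n)) mod M ^ Suc n mod M ^ n = op (f (Suc n)) (g (Suc n)) mod M ^ n"
    by (rule mod_mod_cancel) simp
  also have "\<dots> = op (f n) (g n) mod M ^ n"
    using assms(2,3) by (intro assms(1)) (metis mod_mod_trivial)+
  finally show ?thesis ..
qed

lemma mod_uminus_cong2: "(a::int) mod m = c mod m \<Longrightarrow> b mod m = d mod m \<Longrightarrow> (- a) mod m = (- c) mod m"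
  by (rule mod_minus_cong)

lemma padic_compat1:
  fixes M :: int
  assumes "\<And>n. f n = f (Suc n) mod M ^ n"
  shows "(- f n) mod M ^ n = (- f (Suc n)) mod M ^ Suc n mod M ^ n"
proof -
  have "(- f (Suc n)) mod M ^ Suc n mod M ^ n = (- f (Suc n)) mod M ^ n"
    by (rule mod_mod_cancel) simp
  also have "\<dots> = (- f n) mod M ^ n"
    using assms[of n] by (metis mod_minus_cong mod_mod_trivial)
  finally show ?thesis ..
qed

instantiation padic :: (prime_base) comm_ring_1
begin

lift_definition zero_padic :: "'a padic" is "\<lambda>_. 0" by simp
lift_definition one_padic :: "'a padic" is "\<lambda>n. 1 mod (int CARD('a)) ^ n"
  by (simp add: mod_mod_cancel)
lift_definition plus_padic :: "'a padic \<Rightarrow> 'a padic \<Rightarrow> 'a padic"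
  is "\<lambda>f g n. (f n + g n) mod (int CARD('a)) ^ n"
  by (rule padic_compat[OF mod_add_cong])
lift_definition uminus_padic :: "'a padic \<Rightarrow> 'a padic"
  is "\<lambda>f n. (- f n) mod (int CARD('a)) ^ n"
  by (rule padic_compat1)
lift_definition minus_padic :: "'a padic \<Rightarrow> 'a padic \<Rightarrow> 'a padic"
  is "\<lambda>f g n. (f n - g n) mod (int CARD('a)) ^ n"
  by (rule padic_compat[OF mod_diff_cong])
lift_definition times_padic :: "'a padic \<Rightarrow> 'a padic \<Rightarrow> 'a padic"
  is "\<lambda>f g n. (f n * g n) mod (int CARD('a)) ^ n"
  by (rule padic_compat[OF mod_mult_cong])

lemma Rep_padic_canon: "Rep_padic (a :: 'a padic) n mod (int CARD('a)) ^ n = Rep_padic a n"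
  using Rep_padic[of a] by (metis (mono_tags, lifting) mem_Collect_eq mod_mod_trivial)

lemma padic_eqI: "(\<And>n. Rep_padic (a :: 'a padic) n = Rep_padic b n) \<Longrightarrow> a = b"
  by (metis Rep_padic_inject ext)

instance
proof
  fix a b c :: "'a padic"
  show "a * b * c = a * (b * c)"
    by (rule padic_eqI) (simp add: times_padic.rep_eq mod_mult_left_eq mod_mult_right_eq mult.assoc)
  show "a * b = b * a"
    by (rule padic_eqI) (simp add: times_padic.rep_eq mult.commute)
  show "1 * a = a"
    by (rule padic_eqI) (simp add: times_padic.rep_eq one_padic.rep_eq mod_mult_left_eq Rep_padic_canon)
  show "a + b + c = a + (b + c)"
    by (rule padic_eqI) (simp add: plus_padic.rep_eq mod_add_left_eq mod_add_right_eq add.assoc)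
  show "a + b = b + a"
    by (rule padic_eqI) (simp add: plus_padic.rep_eq add.commute)
  show "0 + a = a"
    by (rule padic_eqI) (simp add: plus_padic.rep_eq zero_padic.rep_eq Rep_padic_canon)
  show "- a + a = 0"
    by (rule padic_eqI) (simp add: plus_padic.rep_eq uminus_padic.rep_eq zero_padic.rep_eq mod_add_left_eq)
  show "a - b = a + - b"
    by (rule padic_eqI) (simp add: plus_padic.rep_eq uminus_padic.rep_eq minus_padic.rep_eq mod_add_right_eq)
  show "(a + b) * c = a * c + b * c"
    by (rule padic_eqI) (simp add: plus_padic.rep_eq times_padic.rep_eq mod_mult_left_eq mod_add_eq distrib_right)
  show "(0::'a padic) \<noteq> 1"
  proof
    assume "(0::'a padic) = 1"
    then have "Rep_padic (0::'a padic) 1 = Rep_padic (1::'a padic) 1" by simp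
    moreover have "1 < int CARD('a)"
      using prime_base[where 'a='a] prime_gt_1_nat by simp
    ultimately show False by (simp add: zero_padic.rep_eq one_padic.rep_eq)
  qed
qed

end

definition reducible_poly :: "'a::comm_ring_1 poly \<Rightarrow> bool" where
  "reducible_poly g \<longleftrightarrow> (\<exists>a b. degree a \<ge> 1 \<and> degree b \<ge> 1 \<and> g = a * b)"

end

theory Submission
  imports Defs
begin

(* Write the quartic as F0 G0 with F0 = x^2 + p alpha x + p beta + zeta and
   G0 = x^2 - p alpha x + p gamma + zeta, and put alpha = p^k a, beta - gamma = p^k b. Then
   F0 - G0 = p^(k+1) (2 a x + b), and the resultant of G0 and 2 a x + b is b^2 + 4 zeta a^2 modulo p,
   a unit because -zeta is not a square mod p and p does not divide both a and b. So although the
   resultant of F0 and G0 has valuation 2k+2, p^(k+1) times any cubic is U G0 + V F0 with U, V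
   linear. This is what makes Newton's iteration work from precision 2k+3 on: a factorisation of g
   modulo p^m, m >= 2k+3, is corrected by multiples of p^(m-k-1) to one modulo p^(m+1), and the
   limits of the corrections in Z_p give an exact factorisation of g into two monic quadratics. *)

section \<open>Divisibility and limits in the p-adic integers\<close>

abbreviation padic_p :: "'p::prime_base padic" where
  "padic_p \<equiv> of_nat CARD('p)"

lemma Rep_padic_of_int: "Rep_padic (of_int z :: 'p::prime_base padic) n = z mod int CARD('p) ^ n"
proof (induction z rule: int_induct[where k = 0])
  case base
  show ?case by (simp add: zero_padic.rep_eq)
next
  case (step1 i)
  then show ?case by (simp add: plus_padic.rep_eq one_padic.rep_eq mod_add_eq)
next
  case (step2 i)
  then show ?case by (simp add: minus_padic.rep_eq one_padic.rep_eq mod_diff_eq)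
qed

lemma Rep_padic_Suc_mod: "Rep_padic (x :: 'p::prime_base padic) (Suc n) mod int CARD('p) ^ n = Rep_padic x n"
proof -
  have "\<forall>n. Rep_padic x n = Rep_padic x (Suc n) mod int CARD('p) ^ n"
    using Rep_padic[of x] by blast
  then show ?thesis by (rule sym[OF spec[of _ n]])
qed

lemma Rep_padic_mod_le:
  assumes "i \<le> j"
  shows "Rep_padic (x :: 'p::prime_base padic) j mod int CARD('p) ^ i = Rep_padic x i"
  using assms
proof (induction j)
  case 0
  then show ?case using Rep_padic_canon[of x 0] by simp
next
  case (Suc j)
  show ?case
  proof (cases "i = Suc j")
    case True
    then show ?thesis by (simp only: Rep_padic_canon)
  next
    case False
    then have "i \<le> j" using Suc.prems by simp
    then have "Rep_padic x (Suc j) mod int CARD('p) ^ i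
        = Rep_padic x (Suc j) mod int CARD('p) ^ j mod int CARD('p) ^ i"
      by (simp add: mod_mod_cancel le_imp_power_dvd)
    then show ?thesis using Suc.IH \<open>i \<le> j\<close> by (simp add: Rep_padic_Suc_mod)
  qed
qed

lemma Rep_Abs_padic:
  assumes "\<And>n. f n = f (Suc n) mod int CARD('p::prime_base) ^ n"
  shows "Rep_padic (Abs_padic f :: 'p padic) = f"
  by (intro Abs_padic_inverse CollectI allI assms)

lemma Rep_padic_p_power: "Rep_padic (padic_p ^ j :: 'p::prime_base padic) n = int CARD('p) ^ j mod int CARD('p) ^ n"
  using Rep_padic_of_int[of "int CARD('p) ^ j" n, where 'p = 'p] by simp

lemma padic_p_power_dvd_iff_Rep: "padic_p ^ n dvd (x :: 'p::prime_base padic) \<longleftrightarrow> Rep_padic x n = 0"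
proof
  assume "padic_p ^ n dvd x"
  then obtain y where "x = padic_p ^ n * y" ..
  then show "Rep_padic x n = 0" by (simp add: times_padic.rep_eq Rep_padic_p_power)
next
  let ?M = "int CARD('p)"
  assume x_n: "Rep_padic x n = 0"
  have M_n_dvd: "?M ^ n dvd Rep_padic x (m + n)" for m
    using Rep_padic_mod_le[of n "m + n" x] x_n by (simp add: mod_eq_0_iff_dvd)
  have M_n_nonzero: "?M ^ n \<noteq> 0"
    using card_pos_pb[where 'p = 'p] by simp
  define f where "f m = Rep_padic x (m + n) div ?M ^ n" for m
  have f_compat: "f m = f (Suc m) mod ?M ^ m" for m
  proof -
    have "?M ^ n * f m = Rep_padic x (Suc m + n) mod ?M ^ (m + n)"
      using Rep_padic_Suc_mod[of x "m + n"] M_n_dvd[of m] by (simp add: f_def)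
    also have "\<dots> = ?M ^ n * (f (Suc m) mod ?M ^ m)"
      using M_n_dvd[of "Suc m"] by (simp add: f_def power_add mult.commute flip: mod_mult_mult1)
    finally show ?thesis using M_n_nonzero by (metis mult_left_cancel)
  qed
  have "x = padic_p ^ n * Abs_padic f"
  proof (rule padic_eqI)
    fix m
    have "Rep_padic (padic_p ^ n * Abs_padic f :: 'p padic) m = (?M ^ n * f m) mod ?M ^ m"
      by (simp add: times_padic.rep_eq Rep_padic_p_power Rep_Abs_padic[OF f_compat] mod_mult_left_eq)
    also have "\<dots> = Rep_padic x (m + n) mod ?M ^ m"
      using M_n_dvd[of m] by (simp add: f_def)
    also have "\<dots> = Rep_padic x m"
      by (rule Rep_padic_mod_le) simp
    finally show "Rep_padic x m = Rep_padic (padic_p ^ n * Abs_padic f :: 'p padic) m" by (rule sym)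
  qed
  then show "padic_p ^ n dvd x" ..
qed

lemma padic_p_power_dvd_diff_iff_Rep:
  "padic_p ^ n dvd (a - b :: 'p::prime_base padic) \<longleftrightarrow> Rep_padic a n = Rep_padic b n"
proof -
  let ?M = "int CARD('p)"
  have "Rep_padic (a - b) n = 0 \<longleftrightarrow> ?M ^ n dvd Rep_padic a n - Rep_padic b n"
    by (simp add: minus_padic.rep_eq mod_eq_0_iff_dvd)
  also have "\<dots> \<longleftrightarrow> Rep_padic a n mod ?M ^ n = Rep_padic b n mod ?M ^ n"
    by (simp add: mod_eq_dvd_iff)
  also have "\<dots> \<longleftrightarrow> Rep_padic a n = Rep_padic b n"
    by (simp only: Rep_padic_canon)
  finally show ?thesis by (simp only: padic_p_power_dvd_iff_Rep)
qed

lemma padic_eq_0_if_p_power_dvd: "(\<And>n. padic_p ^ n dvd (x :: 'p::prime_base padic)) \<Longrightarrow> x = 0"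
  by (rule padic_eqI) (simp add: padic_p_power_dvd_iff_Rep zero_padic.rep_eq)

lemma padic_cauchy_limit:
  fixes X :: "nat \<Rightarrow> 'p::prime_base padic"
  assumes "\<And>n. padic_p ^ n dvd X (Suc n) - X n"
  shows "\<exists>l. \<forall>n. padic_p ^ n dvd l - X n"
proof
  define f where "f n = Rep_padic (X n) n" for n
  have f_compat: "f n = f (Suc n) mod int CARD('p) ^ n" for n
    using assms[of n] by (simp add: f_def Rep_padic_Suc_mod padic_p_power_dvd_diff_iff_Rep)
  show "\<forall>n. padic_p ^ n dvd Abs_padic f - X n"
    by (simp add: padic_p_power_dvd_diff_iff_Rep Rep_Abs_padic[OF f_compat] f_def)
qed

lemma padic_p_dvd_iff_Rep: "padic_p dvd (x :: 'p::prime_base padic) \<longleftrightarrow> int CARD('p) dvd Rep_padic x 1"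
  using padic_p_power_dvd_iff_Rep[of 1 x] Rep_padic_canon[of x 1] by (auto simp: mod_eq_0_iff_dvd)

lemma padic_p_dvd_mult:
  assumes "padic_p dvd x * (y :: 'p::prime_base padic)"
  shows "padic_p dvd x \<or> padic_p dvd y"
proof -
  have "prime (int CARD('p))"
    using prime_base[where 'a = 'p] by simp
  moreover have "int CARD('p) dvd Rep_padic x 1 * Rep_padic y 1"
    using assms by (simp add: padic_p_dvd_iff_Rep times_padic.rep_eq dvd_mod_iff)
  ultimately show ?thesis
    by (simp add: padic_p_dvd_iff_Rep prime_dvd_mult_iff)
qed

lemma padic_p_not_dvd_2:
  assumes "odd CARD('p::prime_base)"
  shows "\<not> padic_p dvd (2 :: 'p padic)"
proof
  assume "padic_p dvd (2 :: 'p padic)"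
  then have "int CARD('p) dvd 2"
    using Rep_padic_of_int[of 2 1, where 'p = 'p] by (simp add: padic_p_dvd_iff_Rep dvd_mod_iff)
  then have "CARD('p) \<le> 2"
    using zdvd_imp_le[of "int CARD('p)" 2] by simp
  moreover have "CARD('p) \<ge> 2"
    using prime_base[where 'a = 'p] prime_ge_2_nat by blast
  ultimately show False
    using assms by simp
qed

lemma padic_is_unit_one_minus:
  fixes q :: "'p::prime_base padic"
  assumes "padic_p dvd q"
  shows "1 - q dvd 1"
proof -
  obtain e where q: "q = padic_p * e"
    using assms ..
  have "padic_p ^ n dvd (\<Sum>i<Suc n. q ^ i) - (\<Sum>i<n. q ^ i)" for n
    by (simp add: q power_mult_distrib)
  then obtain l where l: "\<And>n. padic_p ^ n dvd l - (\<Sum>i<n. q ^ i)"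
    using padic_cauchy_limit[of "\<lambda>n. \<Sum>i<n. q ^ i"] by blast
  have "(1 - q) * l - 1 = 0"
  proof (rule padic_eq_0_if_p_power_dvd)
    fix n
    have "(1 - q) * l - 1 = (1 - q) * (l - (\<Sum>i<n. q ^ i)) + ((1 - q) * (\<Sum>i<n. q ^ i) - 1)"
      by (simp add: algebra_simps)
    also have "(1 - q) * (\<Sum>i<n. q ^ i) = 1 - q ^ n"
      by (rule one_diff_power_eq[symmetric])
    finally have "(1 - q) * l - 1 = (1 - q) * (l - (\<Sum>i<n. q ^ i)) - q ^ n"
      by simp
    then show "padic_p ^ n dvd (1 - q) * l - 1"
      using l[of n] by (simp add: q power_mult_distrib)
  qed
  then show ?thesis
    by (metis dvdI eq_iff_diff_eq_0)
qed

lemma padic_is_unit_if_not_p_dvd: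
  assumes "\<not> padic_p dvd (u :: 'p::prime_base padic)"
  shows "u dvd 1"
proof -
  let ?M = "int CARD('p)"
  have "\<not> ?M dvd Rep_padic u 1"
    using assms by (simp add: padic_p_dvd_iff_Rep)
  with prime_base[where 'a = 'p] have "coprime (Rep_padic u 1) ?M"
    by (simp add: prime_imp_coprime coprime_commute)
  then obtain s t where bezout: "s * Rep_padic u 1 + t * ?M = 1"
    by (metis bezout_int coprime_iff_gcd_eq_1)
  have "padic_p dvd 1 - u * of_int s"
  proof -
    have "Rep_padic (1 - u * of_int s :: 'p padic) 1 = (1 - Rep_padic u 1 * s) mod ?M"
      by (simp add: minus_padic.rep_eq times_padic.rep_eq one_padic.rep_eq Rep_padic_of_int
          mod_diff_eq mod_mult_right_eq)
    also have "1 - Rep_padic u 1 * s = t * ?M"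
      using bezout by (simp add: algebra_simps eq_diff_eq)
    finally show ?thesis
      by (simp add: padic_p_dvd_iff_Rep)
  qed
  then have "u * of_int s dvd 1"
    using padic_is_unit_one_minus by fastforce
  then show ?thesis
    by (rule dvd_mult_left)
qed

lemma padic_quadratic_form_anisotropic:
  fixes \<zeta> x y :: "'p::prime_base padic"
  assumes nonsq: "\<not> (\<exists>z. padic_p dvd z ^ 2 - (- \<zeta>))"
    and "padic_p dvd x ^ 2 + \<zeta> * y ^ 2"
  shows "padic_p dvd x \<and> padic_p dvd y"
proof -
  have y: "padic_p dvd y"
  proof (rule ccontr)
    assume "\<not> padic_p dvd y"
    then obtain i where i: "1 = y * i"
      using padic_is_unit_if_not_p_dvd by blast
    have "i ^ 2 * (x ^ 2 + \<zeta> * y ^ 2) = (x * i) ^ 2 - (- \<zeta>) * (y * i) ^ 2"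
      by (simp add: algebra_simps power2_eq_square)
    then have "(x * i) ^ 2 - (- \<zeta>) = i ^ 2 * (x ^ 2 + \<zeta> * y ^ 2)"
      by (simp flip: i)
    then show False
      using nonsq assms(2) by (metis dvd_mult)
  qed
  then have "padic_p dvd x * x"
    using assms(2) by (metis dvd_add_left_iff dvd_mult power2_eq_square)
  then show ?thesis
    using y padic_p_dvd_mult by blast
qed

lemma padic_is_unit_quadratic_form:
  fixes \<zeta> a b t :: "'p::prime_base padic"
  assumes odd_p: "odd CARD('p)"
    and nonsq: "\<not> (\<exists>z. padic_p dvd z ^ 2 - (- \<zeta>))"
    and "\<not> padic_p dvd a \<or> \<not> padic_p dvd b"
  shows "b ^ 2 + \<zeta> * (2 * a) ^ 2 + padic_p * t dvd 1"
proof (rule padic_is_unit_if_not_p_dvd, rule notI)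
  assume "padic_p dvd b ^ 2 + \<zeta> * (2 * a) ^ 2 + padic_p * t"
  then have "padic_p dvd b ^ 2 + \<zeta> * (2 * a) ^ 2"
    by (metis dvd_add_left_iff dvd_triv_left)
  then have "padic_p dvd b \<and> padic_p dvd 2 * a"
    using padic_quadratic_form_anisotropic[OF nonsq] by blast
  then have "padic_p dvd b \<and> padic_p dvd a"
    using padic_p_dvd_mult padic_p_not_dvd_2[OF odd_p] by blast
  then show False
    using assms(3) by blast
qed

lemma coeff_Poly_map_upt: "coeff (Poly (map f [0..<n])) i = (if i < n then f i else 0)"
  by (simp add: nth_default_def)

lemma smult_factor_if_dvd_coeffs:
  fixes c :: "'a::comm_semiring_1"
  assumes "\<And>i. c dvd coeff P i"
  shows "\<exists>E. degree E \<le> degree P \<and> P = smult c E"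
proof -
  obtain q where q: "\<And>i. coeff P i = c * q i"
    using choice[of "\<lambda>i k. coeff P i = c * k"] assms by (auto simp: dvd_def)
  define E where "E = Poly (map q [0..<Suc (degree P)])"
  have coeff_E: "coeff E i = (if i \<le> degree P then q i else 0)" for i
    unfolding E_def by (simp only: coeff_Poly_map_upt less_Suc_eq_le)
  have "P = smult c E"
  proof (rule poly_eqI)
    fix i
    show "coeff P i = coeff (smult c E) i"
    proof (cases "i \<le> degree P")
      case True
      then show ?thesis by (simp add: coeff_E q)
    next
      case False
      then show ?thesis by (simp add: coeff_E coeff_eq_0)
    qed
  qed
  moreover have "degree E \<le> degree P"
    by (rule degree_le) (simp add: coeff_E)
  ultimately show ?thesis by blast
qed

lemma const_poly_dvd_iff_dvd_coeffs:
  fixes c :: "'a::comm_semiring_1"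
  shows "[:c:] dvd P \<longleftrightarrow> (\<forall>i. c dvd coeff P i)"
proof
  assume "[:c:] dvd P"
  then show "\<forall>i. c dvd coeff P i" by auto
next
  assume "\<forall>i. c dvd coeff P i"
  then obtain E where "P = smult c E"
    using smult_factor_if_dvd_coeffs by blast
  then have "P = [:c:] * E" by simp
  then show "[:c:] dvd P" ..
qed

lemma const_poly_dvd_const_poly:
  fixes a b :: "'a::comm_semiring_1"
  shows "a dvd b \<Longrightarrow> [:a:] dvd [:b:]"
  by (simp add: const_poly_dvd_iff_dvd_coeffs coeff_pCons split: nat.split)

lemma degree_mult_diff_less:
  fixes F G H :: "'a::comm_ring_1 poly"
  assumes "lead_coeff F = 1" "lead_coeff G = 1" "lead_coeff H = 1"
    and "degree F + degree G = degree H" "0 < degree H"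
  shows "degree (F * G - H) < degree H"
proof (cases "F * G - H = 0")
  case False
  have "degree (F * G - H) \<le> degree H"
    using degree_mult_le[of F G] assms(4) by (intro degree_diff_le) simp_all
  moreover have "coeff (F * G - H) (degree H) = 0"
    using assms(1-3) by (simp add: coeff_mult_degree_sum flip: assms(4))
  ultimately show ?thesis
    using False by (metis le_neq_implies_less leading_coeff_0_iff)
qed (use assms in simp)

lemma poly_eq_cubic_if_degree_le_3:
  assumes "degree E \<le> 3"
  shows "E = [:coeff E 0, coeff E 1, coeff E 2, coeff E 3:]"
  using assms by (intro poly_eqI) (auto simp: coeff_pCons coeff_eq_0 numeral_eq_Suc split: nat.split)

section \<open>Newton iteration for two monic quadratic factors\<close>

(* (U, V) \<mapsto> U G + V F on pairs of linear polynomials is the Sylvester map of the quadratics F and G. *)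
definition sylvester_covers :: "'a::comm_ring_1 \<Rightarrow> 'a poly \<Rightarrow> 'a poly \<Rightarrow> bool" where
  "sylvester_covers q F G \<longleftrightarrow>
    (\<forall>E. degree E \<le> 3 \<longrightarrow> (\<exists>U V. degree U \<le> 1 \<and> degree V \<le> 1 \<and> U * G + V * F = smult q E))"

(* l0^2 - c l0 l1 + d l1^2 is the resultant of [:d, c, 1:] and [:l0, l1:]; w, v0, v1 are the
   solution of the remaining 3x3 system by Cramer's rule. *)
lemma bezout_quadratic_linear:
  fixes c d l0 l1 :: "'a::comm_ring_1"
  assumes res_unit: "l0 ^ 2 - c * l0 * l1 + d * l1 ^ 2 dvd 1"
    and "degree E \<le> 3"
  shows "\<exists>W V. degree W \<le> 1 \<and> degree V \<le> 1 \<and> E = W * [:d, c, 1:] + V * [:l0, l1:]"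
proof -
  obtain i where i: "1 = (l0 ^ 2 - c * l0 * l1 + d * l1 ^ 2) * i"
    using res_unit ..
  define e0 where "e0 = coeff E 0"
  define e1 where "e1 = coeff E 1 - d * coeff E 3"
  define e2 where "e2 = coeff E 2 - c * coeff E 3"
  define w where "w = i * (l0 ^ 2 * e2 - l1 * l0 * e1 + l1 ^ 2 * e0)"
  define v0 where "v0 = i * (- d * l0 * e2 + l1 * d * e1 + (l0 - c * l1) * e0)"
  define v1 where "v1 = i * ((d * l1 - c * l0) * e2 + l0 * e1 - l1 * e0)"
  have "w * d + v0 * l0 = (l0 ^ 2 - c * l0 * l1 + d * l1 ^ 2) * i * e0"
    "w * c + v0 * l1 + v1 * l0 = (l0 ^ 2 - c * l0 * l1 + d * l1 ^ 2) * i * e1"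
    "w + v1 * l1 = (l0 ^ 2 - c * l0 * l1 + d * l1 ^ 2) * i * e2"
    unfolding w_def v0_def v1_def by (simp_all add: algebra_simps power2_eq_square)
  then have "w * d + v0 * l0 = e0" "w * c + v0 * l1 + v1 * l0 = e1" "w + v1 * l1 = e2"
    by (simp_all flip: i)
  then have "E = [:w, coeff E 3:] * [:d, c, 1:] + [:v0, v1:] * [:l0, l1:]"
    by (subst poly_eq_cubic_if_degree_le_3[OF assms(2)])
      (simp add: e0_def e1_def e2_def algebra_simps)
  then show ?thesis
    by (intro exI[of _ "[:w, coeff E 3:]"] exI[of _ "[:v0, v1:]"]) simp
qed

lemma sylvester_covers_close_quadratics:
  fixes F0 :: "'a::comm_ring_1 poly"
  assumes close: "F0 - [:d, c, 1:] = smult q [:l0, l1:]"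
    and res_unit: "l0 ^ 2 - c * l0 * l1 + d * l1 ^ 2 dvd 1"
  shows "sylvester_covers q F0 [:d, c, 1:]"
  unfolding sylvester_covers_def
proof (intro allI impI)
  fix E :: "'a poly"
  assume "degree E \<le> 3"
  define G0 where "G0 = [:d, c, 1:]"
  obtain W V where WV: "degree W \<le> 1" "degree V \<le> 1" "E = W * G0 + V * [:l0, l1:]"
    using bezout_quadratic_linear[OF res_unit \<open>degree E \<le> 3\<close>] unfolding G0_def by blast
  have "(smult q W - V) * G0 + V * F0 = smult q (W * G0) + V * (F0 - G0)"
    by (simp add: algebra_simps)
  also have "\<dots> = smult q E"
    using close by (simp add: WV(3) G0_def smult_add_right)
  finally have "(smult q W - V) * G0 + V * F0 = smult q E" .
  moreover have "degree (smult q W - V) \<le> 1"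
    using WV(1,2) degree_smult_le[of q W] by (intro degree_diff_le) simp_all
  ultimately show "\<exists>U V. degree U \<le> 1 \<and> degree V \<le> 1 \<and> U * [:d, c, 1:] + V * F0 = smult q E"
    using WV(2) unfolding G0_def by blast
qed

(* The correction is computed from the Sylvester map at (F0, G0) rather than at (F, G); the
   discrepancy is absorbed because F, G agree with F0, G0 modulo pi^(k+2). *)
lemma newton_correction_quadratic_factors:
  fixes \<pi> :: "'a::comm_ring_1" and F0 G0 F G H :: "'a poly"
  assumes linearization: "sylvester_covers (\<pi> ^ (k + 1)) F0 G0"
    and m: "2 * k + 3 \<le> m"
    and F: "[:\<pi> ^ (k + 2):] dvd F - F0" and G: "[:\<pi> ^ (k + 2):] dvd G - G0"
    and err_degree: "degree (F * G - H) \<le> 3" and err: "[:\<pi> ^ m:] dvd F * G - H"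
  shows "\<exists>U V. degree U \<le> 1 \<and> degree V \<le> 1 \<and>
    [:\<pi> ^ (m + 1):] dvd (F + smult (\<pi> ^ (m - k - 1)) U) * (G + smult (\<pi> ^ (m - k - 1)) V) - H"
proof -
  define R where "R = \<pi> ^ (m - k - 1)"
  have pow_split: "\<pi> ^ m = R * \<pi> ^ (k + 1)" "\<pi> ^ (m + 1) = \<pi> ^ (k + 2) * R"
    unfolding R_def power_add[symmetric] using m by (simp_all add: algebra_simps)
  have "\<pi> ^ (m + 1) dvd R * R"
    unfolding R_def power_add[symmetric] using m by (intro le_imp_power_dvd) simp
  then have RR: "[:\<pi> ^ (m + 1):] dvd [:R:] * [:R:]"
    by (simp add: const_poly_dvd_const_poly)
  have "\<forall>i. \<pi> ^ m dvd coeff (F * G - H) i"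
    using err by (rule const_poly_dvd_iff_dvd_coeffs[THEN iffD1])
  then obtain E where "degree E \<le> degree (F * G - H)" "F * G - H = smult (\<pi> ^ m) E"
    using smult_factor_if_dvd_coeffs by blast
  then have E: "degree E \<le> 3" "F * G - H = [:R:] * [:\<pi> ^ (k + 1):] * E"
    using err_degree by (simp_all add: pow_split mult.commute)
  obtain U V where UV: "degree U \<le> 1" "degree V \<le> 1" "U * G0 + V * F0 = smult (\<pi> ^ (k + 1)) (- E)"
    using linearization E(1) unfolding sylvester_covers_def by (metis degree_minus)
  have "(F + [:R:] * U) * (G + [:R:] * V) - H
      = (F * G - H) + [:R:] * (U * G0 + V * F0) + [:R:] * (U * (G - G0) + V * (F - F0)) + [:R:] * [:R:] * (U * V)"
    by (simp add: algebra_simps)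
  also have "\<dots> = [:R:] * (U * (G - G0) + V * (F - F0)) + [:R:] * [:R:] * (U * V)"
    by (simp add: E(2) UV(3))
  finally have "(F + [:R:] * U) * (G + [:R:] * V) - H
      = [:R:] * (U * (G - G0) + V * (F - F0)) + [:R:] * [:R:] * (U * V)" .
  moreover have "[:\<pi> ^ (k + 2):] * [:R:] dvd (U * (G - G0) + V * (F - F0)) * [:R:]"
    using F G by (intro mult_dvd_mono dvd_add dvd_mult) simp_all
  then have "[:\<pi> ^ (m + 1):] dvd [:R:] * (U * (G - G0) + V * (F - F0))"
    by (simp add: pow_split mult_ac)
  ultimately have "[:\<pi> ^ (m + 1):] dvd (F + smult R U) * (G + smult R V) - H"
    using dvd_mult2[OF RR] by (simp add: dvd_add)
  then show ?thesis
    using UV(1,2) unfolding R_def by blast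
qed

lemma newton_step_quadratic_factors:
  fixes \<pi> :: "'a::comm_ring_1" and F0 G0 H U V :: "'a poly"
  assumes linearization: "sylvester_covers (\<pi> ^ (k + 1)) F0 G0"
    and F0: "degree F0 = 2" "lead_coeff F0 = 1" and G0: "degree G0 = 2" "lead_coeff G0 = 1"
    and H: "degree H = 4" "lead_coeff H = 1"
    and m: "2 * k + 3 \<le> m"
    and U: "degree U \<le> 1" "[:\<pi> ^ (k + 2):] dvd U" and V: "degree V \<le> 1" "[:\<pi> ^ (k + 2):] dvd V"
    and err: "[:\<pi> ^ m:] dvd (F0 + U) * (G0 + V) - H"
  shows "\<exists>U' V'. degree U' \<le> 1 \<and> degree V' \<le> 1 \<and> [:\<pi> ^ (k + 2):] dvd U' \<and> [:\<pi> ^ (k + 2):] dvd V' \<and>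
    [:\<pi> ^ (m - k - 1):] dvd U' - U \<and> [:\<pi> ^ (m - k - 1):] dvd V' - V \<and>
    [:\<pi> ^ (m + 1):] dvd (F0 + U') * (G0 + V') - H"
proof -
  define R where "R = \<pi> ^ (m - k - 1)"
  have F: "degree (F0 + U) = 2" "lead_coeff (F0 + U) = 1"
    using F0 U(1) lead_coeff_add_le[of U F0] by (simp_all add: degree_add_eq_left add.commute)
  have G: "degree (G0 + V) = 2" "lead_coeff (G0 + V) = 1"
    using G0 V(1) lead_coeff_add_le[of V G0] by (simp_all add: degree_add_eq_left add.commute)
  have "degree ((F0 + U) * (G0 + V) - H) \<le> 3"
    using degree_mult_diff_less[OF F(2) G(2) H(2)] by (simp add: F(1) G(1) H(1))
  then obtain U1 V1 where UV1: "degree U1 \<le> 1" "degree V1 \<le> 1"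
      "[:\<pi> ^ (m + 1):] dvd (F0 + U + smult R U1) * (G0 + V + smult R V1) - H"
    using newton_correction_quadratic_factors[OF linearization m _ _ _ err] U(2) V(2)
    unfolding R_def by auto
  have R_dvd: "[:\<pi> ^ j:] dvd smult R W" if "j \<le> m - k - 1" for j W
  proof -
    have "[:\<pi> ^ j:] dvd [:R:] * W"
      using const_poly_dvd_const_poly[OF le_imp_power_dvd[OF that]] unfolding R_def by (rule dvd_mult2)
    then show ?thesis by simp
  qed
  show ?thesis
  proof (intro exI conjI)
    show "degree (U + smult R U1) \<le> 1" "degree (V + smult R V1) \<le> 1"
      using U(1) V(1) UV1(1,2) by (auto intro!: degree_add_le order.trans[OF degree_smult_le])
    have "k + 2 \<le> m - k - 1"
      using m by simp
    then show "[:\<pi> ^ (k + 2):] dvd U + smult R U1" "[:\<pi> ^ (k + 2):] dvd V + smult R V1"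
      using U(2) V(2) R_dvd by (blast intro: dvd_add)+
    show "[:\<pi> ^ (m - k - 1):] dvd U + smult R U1 - U" "[:\<pi> ^ (m - k - 1):] dvd V + smult R V1 - V"
      using R_dvd by simp_all
    show "[:\<pi> ^ (m + 1):] dvd (F0 + (U + smult R U1)) * (G0 + (V + smult R V1)) - H"
      using UV1(3) by (simp add: add.assoc)
  qed
qed

lemma newton_sequence_quadratic_factors:
  fixes \<pi> :: "'a::comm_ring_1" and F0 G0 H :: "'a poly"
  assumes linearization: "sylvester_covers (\<pi> ^ (k + 1)) F0 G0"
    and F0: "degree F0 = 2" "lead_coeff F0 = 1" and G0: "degree G0 = 2" "lead_coeff G0 = 1"
    and H: "degree H = 4" "lead_coeff H = 1"
    and approx: "[:\<pi> ^ (2 * k + 3):] dvd F0 * G0 - H"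
  shows "\<exists>U V. \<forall>n. degree (U n) \<le> 1 \<and> degree (V n) \<le> 1 \<and>
    [:\<pi> ^ n:] dvd U (Suc n) - U n \<and> [:\<pi> ^ n:] dvd V (Suc n) - V n \<and>
    [:\<pi> ^ (2 * k + 3 + n):] dvd (F0 + U n) * (G0 + V n) - H"
proof -
  define approx_at :: "nat \<Rightarrow> 'a poly \<times> 'a poly \<Rightarrow> bool" where
    "approx_at n UV \<longleftrightarrow> degree (fst UV) \<le> 1 \<and> degree (snd UV) \<le> 1 \<and>
      [:\<pi> ^ (k + 2):] dvd fst UV \<and> [:\<pi> ^ (k + 2):] dvd snd UV \<and>
      [:\<pi> ^ (2 * k + 3 + n):] dvd (F0 + fst UV) * (G0 + snd UV) - H" for n UV
  define close_at :: "nat \<Rightarrow> 'a poly \<times> 'a poly \<Rightarrow> 'a poly \<times> 'a poly \<Rightarrow> bool" where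
    "close_at n UV UV' \<longleftrightarrow> [:\<pi> ^ n:] dvd fst UV' - fst UV \<and> [:\<pi> ^ n:] dvd snd UV' - snd UV" for n UV UV'
  have "approx_at 0 (0, 0)"
    using approx by (simp add: approx_at_def)
  moreover have "\<exists>UV'. approx_at (Suc n) UV' \<and> close_at n UV UV'" if "approx_at n UV" for n UV
  proof -
    have approx_n: "degree (fst UV) \<le> 1" "[:\<pi> ^ (k + 2):] dvd fst UV"
        "degree (snd UV) \<le> 1" "[:\<pi> ^ (k + 2):] dvd snd UV"
        "[:\<pi> ^ (2 * k + 3 + n):] dvd (F0 + fst UV) * (G0 + snd UV) - H"
      using that unfolding approx_at_def by simp_all
    obtain U' V' where UV': "degree U' \<le> 1" "degree V' \<le> 1" "[:\<pi> ^ (k + 2):] dvd U'" "[:\<pi> ^ (k + 2):] dvd V'"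
        "[:\<pi> ^ (2 * k + 3 + n - k - 1):] dvd U' - fst UV" "[:\<pi> ^ (2 * k + 3 + n - k - 1):] dvd V' - snd UV"
        "[:\<pi> ^ (2 * k + 3 + n + 1):] dvd (F0 + U') * (G0 + V') - H"
      using newton_step_quadratic_factors[OF linearization F0 G0 H le_add1 approx_n] by blast
    have "[:\<pi> ^ n:] dvd [:\<pi> ^ (2 * k + 3 + n - k - 1):]"
      by (simp add: const_poly_dvd_const_poly le_imp_power_dvd)
    then show ?thesis
      using UV' by (intro exI[of _ "(U', V')"]) (auto simp: approx_at_def close_at_def intro: dvd_trans)
  qed
  ultimately obtain UV where "\<forall>n. approx_at n (UV n) \<and> close_at n (UV n) (UV (Suc n))"
    using dependent_nat_choice[of approx_at close_at] by blast
  then show ?thesis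
    by (intro exI[of _ "\<lambda>n. fst (UV n)"] exI[of _ "\<lambda>n. snd (UV n)"]) (simp add: approx_at_def close_at_def)
qed

section \<open>Hensel lifting in the p-adic integers\<close>

lemma padic_poly_eq_0_if_p_power_dvd:
  fixes P :: "'p::prime_base padic poly"
  assumes "\<And>n. [:padic_p ^ n:] dvd P"
  shows "P = 0"
proof (rule poly_eqI)
  fix i
  have "padic_p ^ n dvd coeff P i" for n
    using assms[of n] by (simp add: const_poly_dvd_iff_dvd_coeffs)
  then show "coeff P i = coeff 0 i"
    by (simp add: padic_eq_0_if_p_power_dvd)
qed

lemma padic_poly_cauchy_limit:
  fixes X :: "nat \<Rightarrow> 'p::prime_base padic poly"
  assumes "\<And>n. degree (X n) \<le> d" and "\<And>n. [:padic_p ^ n:] dvd X (Suc n) - X n"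
  shows "\<exists>L. degree L \<le> d \<and> (\<forall>n. [:padic_p ^ n:] dvd L - X n)"
proof -
  have "\<exists>l. \<forall>n. padic_p ^ n dvd l - coeff (X n) i" for i
    using assms(2) by (intro padic_cauchy_limit) (simp add: const_poly_dvd_iff_dvd_coeffs)
  then obtain l where l: "\<And>i n. padic_p ^ n dvd l i - coeff (X n) i"
    by metis
  define L where "L = Poly (map l [0..<Suc d])"
  have coeff_L: "coeff L i = (if i \<le> d then l i else 0)" for i
    unfolding L_def by (simp only: coeff_Poly_map_upt less_Suc_eq_le)
  have "degree L \<le> d"
    by (rule degree_le) (simp add: coeff_L)
  moreover have "[:padic_p ^ n:] dvd L - X n" for n
    unfolding const_poly_dvd_iff_dvd_coeffs
    using l assms(1)[of n] by (simp add: coeff_L coeff_eq_0)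
  ultimately show ?thesis by blast
qed

lemma padic_hensel_quadratic_factors:
  fixes F0 G0 H :: "'p::prime_base padic poly"
  assumes linearization: "sylvester_covers (padic_p ^ (k + 1)) F0 G0"
    and F0: "degree F0 = 2" "lead_coeff F0 = 1" and G0: "degree G0 = 2" "lead_coeff G0 = 1"
    and H: "degree H = 4" "lead_coeff H = 1"
    and approx: "[:padic_p ^ (2 * k + 3):] dvd F0 * G0 - H"
  shows "\<exists>F G. degree F = 2 \<and> degree G = 2 \<and> H = F * G"
proof -
  obtain U V where UV: "\<And>n. degree (U n) \<le> 1" "\<And>n. degree (V n) \<le> 1"
      "\<And>n. [:padic_p ^ n:] dvd U (Suc n) - U n" "\<And>n. [:padic_p ^ n:] dvd V (Suc n) - V n"
      "\<And>n. [:padic_p ^ (2 * k + 3 + n):] dvd (F0 + U n) * (G0 + V n) - H"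
    using newton_sequence_quadratic_factors[OF linearization F0 G0 H approx] by blast
  obtain LU where LU: "degree LU \<le> 1" "\<And>n. [:padic_p ^ n:] dvd LU - U n"
    using padic_poly_cauchy_limit[of U 1] UV(1,3) by blast
  obtain LV where LV: "degree LV \<le> 1" "\<And>n. [:padic_p ^ n:] dvd LV - V n"
    using padic_poly_cauchy_limit[of V 1] UV(2,4) by blast
  have "(F0 + LU) * (G0 + LV) - H = 0"
  proof (rule padic_poly_eq_0_if_p_power_dvd)
    fix n
    have "(F0 + LU) * (G0 + LV) - H
        = ((F0 + U n) * (G0 + V n) - H) + (LU - U n) * (G0 + LV) + (F0 + U n) * (LV - V n)"
      by (simp add: algebra_simps)
    moreover have "[:padic_p ^ n:] dvd (F0 + U n) * (G0 + V n) - H"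
      using UV(5)[of n] const_poly_dvd_const_poly[OF le_imp_power_dvd, of n "2 * k + 3 + n"]
      by (auto intro: dvd_trans)
    ultimately show "[:padic_p ^ n:] dvd (F0 + LU) * (G0 + LV) - H"
      using LU(2)[of n] LV(2)[of n] by (metis dvd_add dvd_mult dvd_mult2)
  qed
  moreover have "degree (F0 + LU) = 2" "degree (G0 + LV) = 2"
    using F0 G0 LU(1) LV(1) by (simp_all add: degree_add_eq_left)
  ultimately show ?thesis
    by auto
qed

theorem claim1:
  fixes \<zeta> \<alpha> \<beta> \<gamma> :: "'p::prime_base padic" and k :: nat
  defines "p \<equiv> (of_nat CARD('p) :: 'p padic)"
  assumes odd_p: "odd CARD('p)"
    and nonsq: "\<not> (\<exists>y::'p padic. p dvd (y ^ 2 - (- \<zeta>)))"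
    and div_k: "p ^ k dvd \<alpha>" "p ^ k dvd (\<beta> - \<gamma>)"
    and ndiv_k1: "\<not> p ^ (k + 1) dvd \<alpha> \<or> \<not> p ^ (k + 1) dvd (\<beta> - \<gamma>)"
  shows "\<forall>g :: 'p padic poly.
           degree g = 4 \<and> lead_coeff g = 1 \<and>
           (\<forall>i. p ^ (2 * k + 3) dvd (coeff g i -
              coeff ([:p * \<beta> + \<zeta>, p * \<alpha>, 1:] * [:p * \<gamma> + \<zeta>, - (p * \<alpha>), 1:]) i))
           \<longrightarrow> reducible_poly g"
proof (intro allI impI, elim conjE)
  fix g :: "'p padic poly"
  assume g: "degree g = 4" "lead_coeff g = 1"
    and g_approx: "\<forall>i. p ^ (2 * k + 3) dvd (coeff g i -
       coeff ([:p * \<beta> + \<zeta>, p * \<alpha>, 1:] * [:p * \<gamma> + \<zeta>, - (p * \<alpha>), 1:]) i)"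
  have p: "p = padic_p"
    by (simp add: p_def)
  obtain a where a: "\<alpha> = p ^ k * a"
    using div_k(1) ..
  obtain b where b: "\<beta> = \<gamma> + p ^ k * b"
    using div_k(2) by (metis dvdE diff_add_cancel add.commute)
  define F0 where "F0 = [:p * \<beta> + \<zeta>, p * \<alpha>, 1:]"
  define G0 where "G0 = [:p * \<gamma> + \<zeta>, - (p * \<alpha>), 1:]"
  have close: "F0 - G0 = smult (p ^ (k + 1)) [:b, 2 * a:]"
    by (simp add: F0_def G0_def a b algebra_simps)
  have "\<not> p dvd a \<or> \<not> p dvd b"
    using ndiv_k1 by (auto simp: a b mult.commute[of p] mult_dvd_mono)
  then have "b ^ 2 + \<zeta> * (2 * a) ^ 2 + p * (2 * \<alpha> * b * a + 4 * \<gamma> * a ^ 2) dvd 1"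
    using padic_is_unit_quadratic_form[OF odd_p] nonsq unfolding p by blast
  then have res_unit: "b ^ 2 - (- (p * \<alpha>)) * b * (2 * a) + (p * \<gamma> + \<zeta>) * (2 * a) ^ 2 dvd 1"
    by (simp add: algebra_simps power2_eq_square)
  have linearization: "sylvester_covers (p ^ (k + 1)) F0 G0"
    using sylvester_covers_close_quadratics[OF close[unfolded G0_def] res_unit] unfolding G0_def .
  have "[:p ^ (2 * k + 3):] dvd g - F0 * G0"
    using g_approx unfolding F0_def G0_def const_poly_dvd_iff_dvd_coeffs coeff_diff .
  then have approx: "[:p ^ (2 * k + 3):] dvd F0 * G0 - g"
    by (metis dvd_minus_iff minus_diff_eq)
  have "\<exists>F G. degree F = 2 \<and> degree G = 2 \<and> g = F * G"
    by (rule padic_hensel_quadratic_factors[OF linearization[unfolded p] _ _ _ _ _ _ approx[unfolded p]])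
      (use g in \<open>simp_all add: F0_def G0_def\<close>)
  then show "reducible_poly g"
    unfolding reducible_poly_def by force
qed

end
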